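(* Any time-optimal trajectory of the problem below (with $T>0$) ends with an $X$-arc; that is, the control $A$ equals $X$ on some interval $(T-\delta,T]$, $\delta>0$.
   Context: Fix $\gamma\in(0,\pi/2)$, $s=\sin\gamma$, $c=\cos\gamma$, and $X=\begin{pmatrix}0&s^2&sc\\-s^2&0&0\\-sc&0&0\end{pmatrix}$, $Y=\begin{pmatrix}0&1&0\\-1&0&0\\0&0&0\end{pmatrix}$ on $\mathbb R^3$ with standard basis $e_1,e_2,e_3$. Let $\Sigma=\{\psi:\langle e_3,\psi\rangle=0\}$, $\psi_0=(0,s,c)^\top$. Time-optimal problem: over piecewise constant controls $A:[0,T]\to\{X,Y\}$ with finitely many discontinuities and trajectories $\dot\psi=A(t)\psi$, $\psi(0)=\psi_0$, minimize $T$ subject to $\psi(T)\in\Sigma$. Maximal intervals on which $A\equiv X$ are called $X$-arcs. *)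

theory Defs
  imports "HOL-Analysis.Analysis"
begin

text \<open>Standard basis vectors e1, e2, e3 of real^3 correspond to indices 1, 2, 3 of type 3.\<close>

definition matX :: "real \<Rightarrow> real^3^3" where
  "matX \<gamma> = (\<chi> i j.
     if i = 1 \<and> j = 2 then (sin \<gamma>)^2
     else if i = 1 \<and> j = 3 then sin \<gamma> * cos \<gamma>
     else if i = 2 \<and> j = 1 then - ((sin \<gamma>)^2)
     else if i = 3 \<and> j = 1 then - (sin \<gamma> * cos \<gamma>)
     else 0)"

definition matY :: "real^3^3" where
  "matY = (\<chi> i j.
     if i = 1 \<and> j = 2 then 1
     else if i = 2 \<and> j = 1 then -1
     else 0)"

definition psi0 :: "real \<Rightarrow> real^3" where
  "psi0 \<gamma> = (\<chi> i. if i = 1 then 0 else if i = 2 then sin \<gamma> else cos \<gamma>)"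

definition Sigma_set :: "(real^3) set" where
  "Sigma_set = {\<psi>. \<psi> $ 3 = 0}"

definition pw_const_control :: "real \<Rightarrow> real \<Rightarrow> (real \<Rightarrow> real^3^3) \<Rightarrow> bool" where
  "pw_const_control \<gamma> T A \<longleftrightarrow>
     (\<forall>t\<in>{0..T}. A t \<in> {matX \<gamma>, matY}) \<and>
     (\<exists>D. finite D \<and> (\<forall>t\<in>{0..T} - D. \<exists>e>0. \<forall>s\<in>{0..T}. \<bar>s - t\<bar> < e \<longrightarrow> A s = A t))"

definition trajectory :: "real \<Rightarrow> real \<Rightarrow> (real \<Rightarrow> real^3^3) \<Rightarrow> (real \<Rightarrow> real^3) \<Rightarrow> bool" where
  "trajectory \<gamma> T A \<psi> \<longleftrightarrow>
     continuous_on {0..T} \<psi> \<and> \<psi> 0 = psi0 \<gamma> \<and>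
     (\<exists>D. finite D \<and> (\<forall>t\<in>{0<..<T} - D. (\<psi> has_vector_derivative (A t *v \<psi> t)) (at t)))"

definition admissible :: "real \<Rightarrow> real \<Rightarrow> (real \<Rightarrow> real^3^3) \<Rightarrow> (real \<Rightarrow> real^3) \<Rightarrow> bool" where
  "admissible \<gamma> T A \<psi> \<longleftrightarrow>
     0 \<le> T \<and> pw_const_control \<gamma> T A \<and> trajectory \<gamma> T A \<psi> \<and> \<psi> T \<in> Sigma_set"

definition time_optimal :: "real \<Rightarrow> real \<Rightarrow> (real \<Rightarrow> real^3^3) \<Rightarrow> (real \<Rightarrow> real^3) \<Rightarrow> bool" where
  "time_optimal \<gamma> T A \<psi> \<longleftrightarrow>
     admissible \<gamma> T A \<psi> \<and> (\<forall>T' A' \<psi>'. admissible \<gamma> T' A' \<psi>' \<longrightarrow> T \<le> T')"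

end

theory Submission
  imports Defs
begin

text \<open>The generator \<open>Y\<close> has zero third row, so along a \<open>Y\<close>-arc the coordinate \<open>\<langle>e\<^sub>3, \<psi>\<rangle>\<close>
  that defines the target \<open>\<Sigma>\<close> does not move. A piecewise constant control is constant on some
  final interval \<open>[t\<^sub>0, T)\<close>; were it \<open>Y\<close> there, the trajectory would already lie in \<open>\<Sigma>\<close> at
  time \<open>t\<^sub>0 < T\<close>, and stopping at \<open>t\<^sub>0\<close> would beat \<open>T\<close>.\<close>

lemma locally_constant_imp_constant_on:
  fixes f :: "'a::metric_space \<Rightarrow> 'b"
  assumes "connected S"
    and "\<And>x. x \<in> S \<Longrightarrow> \<exists>e>0. \<forall>y\<in>S. dist y x < e \<longrightarrow> f y = f x"
  shows "f constant_on S"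
proof (rule locally_constant_imp_constant[OF \<open>connected S\<close>])
  fix x assume "x \<in> S"
  then obtain e where "e > 0" and e: "\<forall>y\<in>S. dist y x < e \<longrightarrow> f y = f x"
    using assms(2) by blast
  show "\<exists>U. openin (top_of_set S) U \<and> x \<in> U \<and> (\<forall>y\<in>U. f y = f x)"
  proof (intro exI conjI)
    show "openin (top_of_set S) (S \<inter> ball x e)"
      by (simp add: openin_open_Int)
    show "x \<in> S \<inter> ball x e"
      using \<open>x \<in> S\<close> \<open>e > 0\<close> by simp
    show "\<forall>y\<in>S \<inter> ball x e. f y = f x"
      using e by (simp add: dist_commute)
  qed
qed

lemma pw_const_control_constant_near_end:
  assumes "pw_const_control \<gamma> T A" and "0 < T"
  obtains t\<^sub>0 where "0 \<le> t\<^sub>0" "t\<^sub>0 < T" "A t\<^sub>0 \<in> {matX \<gamma>, matY}"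
    "\<And>t. t \<in> {t\<^sub>0..<T} \<Longrightarrow> A t = A t\<^sub>0"
proof -
  obtain D where "finite D"
    and loc: "\<forall>t\<in>{0..T} - D. \<exists>e>0. \<forall>s\<in>{0..T}. \<bar>s - t\<bar> < e \<longrightarrow> A s = A t"
    using assms(1) unfolding pw_const_control_def by blast
  have "eventually (\<lambda>t. t \<notin> D) (at T)"
    using islimpt_finite[OF \<open>finite D\<close>] by (simp add: islimpt_iff_eventually)
  then have "eventually (\<lambda>t. t \<notin> D \<and> t \<in> {0<..<T}) (at_left T)"
    using eventually_at_left_real[OF \<open>0 < T\<close>]
    by (simp add: eventually_at_split eventually_conj_iff)
  then obtain b where "b < T" and b: "\<And>t. b < t \<Longrightarrow> t < T \<Longrightarrow> t \<notin> D \<and> t \<in> {0<..<T}"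
    by (auto simp: eventually_at_left_field)
  then have interval: "{b<..<T} \<subseteq> {0..T} - D"
    by force
  have "A constant_on {b<..<T}"
  proof (rule locally_constant_imp_constant_on)
    fix x assume "x \<in> {b<..<T}"
    then have "x \<in> {0..T} - D" using interval by blast
    then obtain e where "e > 0" "\<forall>s\<in>{0..T}. \<bar>s - x\<bar> < e \<longrightarrow> A s = A x"
      using loc by blast
    then show "\<exists>e>0. \<forall>y\<in>{b<..<T}. dist y x < e \<longrightarrow> A y = A x"
      using interval by (auto simp: dist_real_def)
  qed simp
  define t\<^sub>0 where "t\<^sub>0 = (b + T) / 2"
  have "t\<^sub>0 \<in> {b<..<T}" and "0 < t\<^sub>0" and "t\<^sub>0 < T"
    using \<open>b < T\<close> b[of t\<^sub>0] by (auto simp: t\<^sub>0_def)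
  show thesis
  proof (rule that)
    show "0 \<le> t\<^sub>0" using \<open>0 < t\<^sub>0\<close> by simp
    show "t\<^sub>0 < T" by fact
    show "A t\<^sub>0 \<in> {matX \<gamma>, matY}"
      using assms(1) \<open>0 < t\<^sub>0\<close> \<open>t\<^sub>0 < T\<close> unfolding pw_const_control_def by auto
    fix t assume "t \<in> {t\<^sub>0..<T}"
    then have "t \<in> {b<..<T}" using \<open>t\<^sub>0 \<in> {b<..<T}\<close> by auto
    then show "A t = A t\<^sub>0"
      using \<open>A constant_on {b<..<T}\<close> \<open>t\<^sub>0 \<in> {b<..<T}\<close> unfolding constant_on_def by metis
  qed
qed

lemma third_component_matY_mult: "(matY *v v) $ 3 = 0"
  unfolding matY_def matrix_vector_mult_def by (simp add: sum_3)

lemma matY_arc_keeps_third_component: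
  fixes \<psi> :: "real \<Rightarrow> real^3"
  assumes "a \<le> b" and "continuous_on {a..b} \<psi>" and "finite D"
    and deriv: "\<And>t. t \<in> {a<..<b} - D \<Longrightarrow> (\<psi> has_vector_derivative (matY *v \<psi> t)) (at t)"
  shows "\<psi> b $ 3 = \<psi> a $ 3"
proof (rule has_derivative_zero_unique_strong_interval[of "D \<union> {a, b}" a b "\<lambda>t. \<psi> t $ 3"])
  show "continuous_on {a..b} (\<lambda>t. \<psi> t $ 3)"
    using assms(2) by (intro continuous_intros)
  fix t assume "t \<in> {a..b} - (D \<union> {a, b})"
  then have "((\<lambda>t. \<psi> t $ 3) has_vector_derivative (matY *v \<psi> t) $ 3) (at t)"
    using deriv by (intro bounded_linear.has_vector_derivative[OF bounded_linear_vec_nth]) auto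
  then show "((\<lambda>t. \<psi> t $ 3) has_derivative (\<lambda>h. 0)) (at t within {a..b})"
    by (simp add: third_component_matY_mult has_vector_derivative_def has_derivative_at_withinI)
qed (use assms in auto)

lemma admissible_truncate:
  assumes "admissible \<gamma> T A \<psi>" and "0 \<le> t" and "t \<le> T" and "\<psi> t \<in> Sigma_set"
  shows "admissible \<gamma> t A \<psi>"
proof -
  obtain D\<^sub>A where "finite D\<^sub>A"
    and loc: "\<forall>s\<in>{0..T} - D\<^sub>A. \<exists>e>0. \<forall>r\<in>{0..T}. \<bar>r - s\<bar> < e \<longrightarrow> A r = A s"
    using assms(1) unfolding admissible_def pw_const_control_def by blast
  have "\<forall>s\<in>{0..t} - D\<^sub>A. \<exists>e>0. \<forall>r\<in>{0..t}. \<bar>r - s\<bar> < e \<longrightarrow> A r = A s"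
  proof
    fix s assume "s \<in> {0..t} - D\<^sub>A"
    then have "s \<in> {0..T} - D\<^sub>A" using \<open>t \<le> T\<close> by auto
    then obtain e where "e > 0" "\<forall>r\<in>{0..T}. \<bar>r - s\<bar> < e \<longrightarrow> A r = A s"
      using loc by blast
    then show "\<exists>e>0. \<forall>r\<in>{0..t}. \<bar>r - s\<bar> < e \<longrightarrow> A r = A s"
      using \<open>t \<le> T\<close> by auto
  qed
  with \<open>finite D\<^sub>A\<close> have "pw_const_control \<gamma> t A"
    using assms(1,3) unfolding admissible_def pw_const_control_def by auto
  moreover have "trajectory \<gamma> t A \<psi>"
  proof -
    obtain D\<^sub>\<psi> where "finite D\<^sub>\<psi>"
      and "\<forall>s\<in>{0<..<T} - D\<^sub>\<psi>. (\<psi> has_vector_derivative (A s *v \<psi> s)) (at s)"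
      and "continuous_on {0..T} \<psi>" and "\<psi> 0 = psi0 \<gamma>"
      using assms(1) unfolding admissible_def trajectory_def by blast
    moreover have "{0..t} \<subseteq> {0..T}" and "{0<..<t} - D\<^sub>\<psi> \<subseteq> {0<..<T} - D\<^sub>\<psi>"
      using \<open>t \<le> T\<close> by auto
    ultimately show ?thesis
      unfolding trajectory_def by (meson continuous_on_subset subsetD)
  qed
  ultimately show ?thesis
    using assms(2,4) unfolding admissible_def by blast
qed

lemma admissible_drop_final_matY_arc:
  assumes adm: "admissible \<gamma> T A \<psi>" and "0 \<le> t\<^sub>0" and "t\<^sub>0 \<le> T"
    and Y: "\<And>t. t \<in> {t\<^sub>0..<T} \<Longrightarrow> A t = matY"
  shows "admissible \<gamma> t\<^sub>0 A \<psi>"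
proof -
  obtain D where "finite D"
    and deriv: "\<forall>t\<in>{0<..<T} - D. (\<psi> has_vector_derivative (A t *v \<psi> t)) (at t)"
    and "continuous_on {0..T} \<psi>"
    using adm unfolding admissible_def trajectory_def by blast
  have "\<psi> T $ 3 = \<psi> t\<^sub>0 $ 3"
  proof (rule matY_arc_keeps_third_component[OF \<open>t\<^sub>0 \<le> T\<close> _ \<open>finite D\<close>])
    show "continuous_on {t\<^sub>0..T} \<psi>"
      using \<open>continuous_on {0..T} \<psi>\<close> by (rule continuous_on_subset) (use \<open>0 \<le> t\<^sub>0\<close> in auto)
    fix t assume "t \<in> {t\<^sub>0<..<T} - D"
    then have "t \<in> {0<..<T} - D" and "A t = matY"
      using Y[of t] \<open>0 \<le> t\<^sub>0\<close> by auto
    from deriv \<open>t \<in> {0<..<T} - D\<close> have "(\<psi> has_vector_derivative (A t *v \<psi> t)) (at t)"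
      by (rule bspec)
    with \<open>A t = matY\<close> show "(\<psi> has_vector_derivative (matY *v \<psi> t)) (at t)"
      by simp
  qed
  then have "\<psi> t\<^sub>0 \<in> Sigma_set"
    using adm unfolding admissible_def Sigma_set_def by simp
  with adm \<open>0 \<le> t\<^sub>0\<close> \<open>t\<^sub>0 \<le> T\<close> show ?thesis
    by (simp add: admissible_truncate)
qed

theorem lemmaA1:
  fixes \<gamma> T :: real and A :: "real \<Rightarrow> real^3^3" and \<psi> :: "real \<Rightarrow> real^3"
  assumes "0 < \<gamma>" and "\<gamma> < pi / 2"
    and "time_optimal \<gamma> T A \<psi>"
    and "0 < T"
  shows "\<exists>\<delta>>0. \<forall>t\<in>{T - \<delta><..<T}. A t = matX \<gamma>"
proof -
  have adm: "admissible \<gamma> T A \<psi>"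
    and opt: "\<And>T' A' \<psi>'. admissible \<gamma> T' A' \<psi>' \<Longrightarrow> T \<le> T'"
    using assms(3) unfolding time_optimal_def by auto
  then have "pw_const_control \<gamma> T A"
    unfolding admissible_def by blast
  then obtain t\<^sub>0 where "0 \<le> t\<^sub>0" "t\<^sub>0 < T" and A_t\<^sub>0: "A t\<^sub>0 \<in> {matX \<gamma>, matY}"
    and const: "\<And>t. t \<in> {t\<^sub>0..<T} \<Longrightarrow> A t = A t\<^sub>0"
    using \<open>0 < T\<close> by (rule pw_const_control_constant_near_end) blast
  have "A t\<^sub>0 \<noteq> matY"
  proof
    assume "A t\<^sub>0 = matY"
    then have "A t = matY" if "t \<in> {t\<^sub>0..<T}" for t
      using const[OF that] by simp
    then have "admissible \<gamma> t\<^sub>0 A \<psi>"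
      using \<open>t\<^sub>0 < T\<close> by (intro admissible_drop_final_matY_arc[OF adm \<open>0 \<le> t\<^sub>0\<close>]) auto
    then have "T \<le> t\<^sub>0" by (rule opt)
    with \<open>t\<^sub>0 < T\<close> show False by simp
  qed
  with A_t\<^sub>0 have "A t = matX \<gamma>" if "t \<in> {t\<^sub>0..<T}" for t
    using const[OF that] by simp
  then have "\<forall>t\<in>{T - (T - t\<^sub>0)<..<T}. A t = matX \<gamma>"
    by simp
  with \<open>t\<^sub>0 < T\<close> show ?thesis by (intro exI[of _ "T - t\<^sub>0"]) simp
qed

end
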